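(* Let $\alpha$ be a set with involution $\tau$. A multiplicity-one-free word of length $\le 4$ in the alphabet $\alpha$ has one of the forms $aa$, $aaa$, $aaaa$, $aabb$, $abba$, $bbaa$, $abab$ with distinct $a,b\in\alpha$. The words $aa,aabb,abba,bbaa$ are contractible. The words $aaa$ and $aaaa$ are contractible if and only if $\tau(a)=a$. The word $abab$ is contractible if and only if $\tau(a)=b$. Non-contractible words of the forms $aaa$, $aaaa$, $abab$ are homotopic if and only if they are equal letterwise.
   Context: Fix a set $\alpha$ with an involution $\tau:\alpha\to\alpha$. An $\alpha$-alphabet is a set $\mathcal A$ with a map $\mathcal A\to\alpha$, $A\mapsto|A|$. An étale word over $\alpha$ is a pair $(\mathcal A,w)$ with $\mathcal A$ an $\alpha$-alphabet and $w$ a finite word in letters of $\mathcal A$; two étale words $(\mathcal A_1,w_1),(\mathcal A_2,w_2)$ are isomorphic if there is a bijection $f:\mathcal A_1\to\mathcal A_2$ with $|f(A)|=|A|$ and $w_2$ is $w_1$ with $f$ applied letterwise. A nanoword is an étale word with $\mathcal A$ finite and every letter of $\mathcal A$ occurring exactly twice in $w$. Homotopy moves on nanowords ($x,y,z,t$ words in the remaining letters; smaller alphabets carry the restricted projection): (1) $(\mathcal A,xAAy)\mapsto(\mathcal A\setminus\{A\},xy)$; (2) $(\mathcal A,xAByBAz)\mapsto(\mathcal A\setminus\{A,B\},xyz)$ if $|B|=\tau(|A|)$; (3) $(\mathcal A,xAByACzBCt)\mapsto(\mathcal A,xBAyCAzCBt)$ if $A,B,C$ are distinct and $|A|=|B|=|C|$.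 Homotopy of nanowords is the equivalence relation generated by isomorphisms, these moves and their inverses. Desingularization: for an étale word $(\mathcal A,w)$ with $m_w(A)$ the number of occurrences of $A$, let $\mathcal A^d=\{A_{i,j}: A\in\mathcal A, 1\le i<j\le m_w(A)\}$ with $|A_{i,j}|=|A|$, and let $w^d$ be obtained from $w$ by deleting letters of multiplicity 1 and replacing the $i$-th occurrence of each $A$ with $m=m_w(A)\ge2$ by $A_{1,i}A_{2,i}\cdots A_{i-1,i}A_{i,i+1}\cdots A_{i,m}$; then $(\mathcal A^d,w^d)$ is a nanoword. Two étale words are homotopic if their desingularizations are homotopic nanowords; an étale word is contractible if its desingularization is homotopic to the empty nanoword. A word $w$ in the alphabet $\alpha$ is regarded as the étale word $(\alpha,w)$ with identity projection. A word is multiplicity-one-free if every letter occurring in it occurs at least twice. *)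

theory Defs
  imports Main
begin

text \<open>Nanowords over the alphabet 'a, with letters drawn from an (infinite) letter type 'b.
  A nanoword is represented by a pair (w, p): the word w, whose alphabet is set w
  (every letter occurs exactly twice), and the projection p (only relevant on set w).\<close>

definition is_nanoword :: "'b list \<times> ('b \<Rightarrow> 'a) \<Rightarrow> bool" where
  "is_nanoword N \<longleftrightarrow> (\<forall>A\<in>set (fst N). count_list (fst N) A = 2)"

inductive nw_step :: "('a \<Rightarrow> 'a) \<Rightarrow> 'b list \<times> ('b \<Rightarrow> 'a) \<Rightarrow> 'b list \<times> ('b \<Rightarrow> 'a) \<Rightarrow> bool"
  for \<tau> :: "'a \<Rightarrow> 'a" where
  iso: "is_nanoword (w, p) \<Longrightarrow> inj_on f (set w) \<Longrightarrow> (\<forall>A\<in>set w. q (f A) = p A)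
        \<Longrightarrow> nw_step \<tau> (w, p) (map f w, q)"
| move1: "is_nanoword (x @ [A, A] @ y, p) \<Longrightarrow> nw_step \<tau> (x @ [A, A] @ y, p) (x @ y, p)"
| move2: "is_nanoword (x @ [A, B] @ y @ [B, A] @ z, p) \<Longrightarrow> p B = \<tau> (p A)
        \<Longrightarrow> nw_step \<tau> (x @ [A, B] @ y @ [B, A] @ z, p) (x @ y @ z, p)"
| move3: "is_nanoword (x @ [A, B] @ y @ [A, C] @ z @ [B, C] @ t, p) \<Longrightarrow> distinct [A, B, C]
        \<Longrightarrow> p A = p B \<Longrightarrow> p B = p C
        \<Longrightarrow> nw_step \<tau> (x @ [A, B] @ y @ [A, C] @ z @ [B, C] @ t, p)
                       (x @ [B, A] @ y @ [C, A] @ z @ [C, B] @ t, p)"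

definition nw_homotopic :: "('a \<Rightarrow> 'a) \<Rightarrow> 'b list \<times> ('b \<Rightarrow> 'a) \<Rightarrow> 'b list \<times> ('b \<Rightarrow> 'a) \<Rightarrow> bool" where
  "nw_homotopic \<tau> = (symclp (nw_step \<tau>))\<^sup>*\<^sup>*"

text \<open>Desingularization of a word w in the alphabet 'a (identity projection).
  The letter A_{i,j} is encoded as (A, i, j); its projection is A.\<close>
definition desing :: "'a list \<Rightarrow> ('a \<times> nat \<times> nat) list" where
  "desing w = concat (map (\<lambda>k. let A = w ! k; i = Suc (count_list (take k w) A);
                                   m = count_list w A
                               in map (\<lambda>j. (A, j, i)) [1..<i] @ map (\<lambda>j. (A, i, j)) [Suc i..<Suc m])
                      [0..<length w])"

definition word_homotopic :: "('a \<Rightarrow> 'a) \<Rightarrow> 'a list \<Rightarrow> 'a list \<Rightarrow> bool" where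
  "word_homotopic \<tau> u v \<longleftrightarrow> nw_homotopic \<tau> (desing u, fst) (desing v, fst)"

definition contractible :: "('a \<Rightarrow> 'a) \<Rightarrow> 'a list \<Rightarrow> bool" where
  "contractible \<tau> w \<longleftrightarrow> nw_homotopic \<tau> (desing w, fst) ([], fst)"

definition mult_one_free :: "'a list \<Rightarrow> bool" where
  "mult_one_free w \<longleftrightarrow> (\<forall>x\<in>set w. count_list w x \<ge> 2)"

end

theory Submission
  imports Defs "HOL-Library.Z2"
begin

text \<open>Contractibility in the positive cases
  is witnessed by explicit sequences of moves, where inverse second moves introduce auxiliary
  letters. The negative statements come from two kinds of homotopy invariants of nanowords, both
  built from the linking sign of two letters X, Y (+1 or -1 if the word restricted to X, Y is XYXY
  or YXYX, and 0 otherwise): the linking invariant, summing \<psi>(|X|, \<Sum>Y. sign(X, Y) \<phi>(|Y|)) over X for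
  \<phi>, \<psi> odd under \<tau>, and the crossing invariant, summing u(|X|) v(|Y|) over the pairs with
  sign +1 for odd u, v with u v = 0. With \<phi> the signed indicator of an orbit {a, \<tau> a} with
  \<tau> a \<noteq> a and \<psi>(x, l) = \<phi>(x) l^2, the linking invariant takes the values 2, 16 and 0 on aaa,
  aaaa and abab; orbit indicators with values in \<int>/2 make the crossing invariant of abab equal
  to 1 unless \<tau> a = b.\<close>

section \<open>Explicit homotopies\<close>

lemma nw_homotopic_eq_equivclp: "nw_homotopic \<tau> = equivclp (nw_step \<tau>)"
  by (simp add: nw_homotopic_def equivclp_def)

lemma nw_homotopic_refl: "nw_homotopic \<tau> N N"
  by (simp add: nw_homotopic_eq_equivclp)

lemma nw_homotopic_sym [sym]: "nw_homotopic \<tau> N M \<Longrightarrow> nw_homotopic \<tau> M N"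
  unfolding nw_homotopic_eq_equivclp by (rule equivclp_sym)

lemma nw_homotopic_trans [trans]:
  "nw_homotopic \<tau> N M \<Longrightarrow> nw_homotopic \<tau> M K \<Longrightarrow> nw_homotopic \<tau> N K"
  unfolding nw_homotopic_eq_equivclp by (rule equivclp_trans)

lemma nw_homotopic_move1:
  assumes "x @ [A, A] @ y = w" "x @ y = w'" "is_nanoword (w, p)"
  shows "nw_homotopic \<tau> (w, p) (w', p)"
  using assms nw_step.move1[of x A y p \<tau>] by (auto simp: nw_homotopic_eq_equivclp)

lemma nw_homotopic_move2:
  assumes "x @ [A, B] @ y @ [B, A] @ z = w" "x @ y @ z = w'" "is_nanoword (w, p)"
    and "p B = \<tau> (p A)"
  shows "nw_homotopic \<tau> (w, p) (w', p)"
  using assms nw_step.move2[of x A B y z p \<tau>] by (auto simp: nw_homotopic_eq_equivclp)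

lemma nw_homotopic_move3:
  assumes "x @ [A, B] @ y @ [A, C] @ z @ [B, C] @ t = w"
    and "x @ [B, A] @ y @ [C, A] @ z @ [C, B] @ t = w'"
    and "is_nanoword (w, p)" "distinct [A, B, C]" "p A = p B" "p B = p C"
  shows "nw_homotopic \<tau> (w, p) (w', p)"
  using assms nw_step.move3[of x A B y C z t p \<tau>] by (auto simp: nw_homotopic_eq_equivclp)

lemma desing_aa: "desing [a, a] = [(a, 1, 2), (a, 1, 2)]"
  by (simp add: desing_def upt_rec)

lemma desing_aaa: "desing [a, a, a] = [(a, 1, 2), (a, 1, 3), (a, 1, 2), (a, 2, 3), (a, 1, 3), (a, 2, 3)]"
  by (simp add: desing_def upt_rec)

lemma desing_aaaa:
  "desing [a, a, a, a] = [(a, 1, 2), (a, 1, 3), (a, 1, 4), (a, 1, 2), (a, 2, 3), (a, 2, 4),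
                          (a, 1, 3), (a, 2, 3), (a, 3, 4), (a, 1, 4), (a, 2, 4), (a, 3, 4)]"
  by (simp add: desing_def upt_rec)

lemma desing_aabb: "a \<noteq> b \<Longrightarrow> desing [a, a, b, b] = [(a, 1, 2), (a, 1, 2), (b, 1, 2), (b, 1, 2)]"
  by (simp add: desing_def upt_rec)

lemma desing_abba: "a \<noteq> b \<Longrightarrow> desing [a, b, b, a] = [(a, 1, 2), (b, 1, 2), (b, 1, 2), (a, 1, 2)]"
  by (simp add: desing_def upt_rec)

lemma desing_abab: "a \<noteq> b \<Longrightarrow> desing [a, b, a, b] = [(a, 1, 2), (b, 1, 2), (a, 1, 2), (b, 1, 2)]"
  by (simp add: desing_def upt_rec)

lemma contractible_aa: "contractible \<tau> [a, a]"
  unfolding contractible_def desing_aa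
  by (rule nw_homotopic_move1[of "[]" _ "[]"]) (simp_all add: is_nanoword_def)

lemma contractible_aabb:
  assumes "a \<noteq> b" shows "contractible \<tau> [a, a, b, b]"
proof -
  let ?A = "(a, 1::nat, 2::nat)" and ?B = "(b, 1::nat, 2::nat)"
  have "nw_homotopic \<tau> ([?A, ?A, ?B, ?B], fst) ([?B, ?B], fst)"
    by (rule nw_homotopic_move1[of "[]" ?A "[?B, ?B]"]) (simp_all add: is_nanoword_def assms assms[symmetric])
  also have "nw_homotopic \<tau> \<dots> ([], fst)"
    by (rule nw_homotopic_move1[of "[]" ?B "[]"]) (simp_all add: is_nanoword_def)
  finally show ?thesis by (simp add: contractible_def desing_aabb assms)
qed

lemma contractible_abba:
  assumes "a \<noteq> b" shows "contractible \<tau> [a, b, b, a]"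
proof -
  let ?A = "(a, 1::nat, 2::nat)" and ?B = "(b, 1::nat, 2::nat)"
  have "nw_homotopic \<tau> ([?A, ?B, ?B, ?A], fst) ([?A, ?A], fst)"
    by (rule nw_homotopic_move1[of "[?A]" ?B "[?A]"]) (simp_all add: is_nanoword_def assms assms[symmetric])
  also have "nw_homotopic \<tau> \<dots> ([], fst)"
    by (rule nw_homotopic_move1[of "[]" ?A "[]"]) (simp_all add: is_nanoword_def)
  finally show ?thesis by (simp add: contractible_def desing_abba assms)
qed

text \<open>The auxiliary letters (a, 0, k) below are fresh: letters of a desingularization have
  first index at least 1.\<close>

lemma contractible_aaa:
  assumes "\<tau> a = a" shows "contractible \<tau> [a, a, a]"
proof -
  let ?A = "(a, 1::nat, 2::nat)" and ?B = "(a, 1::nat, 3::nat)" and ?C = "(a, 2::nat, 3::nat)"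
    and ?D = "(a, 0::nat, 1::nat)" and ?E = "(a, 0::nat, 2::nat)"
    and ?F = "(a, 0::nat, 3::nat)" and ?G = "(a, 0::nat, 4::nat)"
  note simps = is_nanoword_def assms
  have "nw_homotopic \<tau> ([?A, ?B, ?A, ?C, ?B, ?C], fst) ([?B, ?A, ?C, ?A, ?C, ?B], fst)"
    by (rule nw_homotopic_move3[of "[]" ?A ?B "[]" ?C "[]" "[]"]) (simp_all add: simps)
  also have "nw_homotopic \<tau> \<dots> ([?B, ?D, ?E, ?A, ?C, ?E, ?D, ?A, ?C, ?B], fst)"
    by (rule nw_homotopic_sym, rule nw_homotopic_move2[of "[?B]" ?D ?E "[?A, ?C]" "[?A, ?C, ?B]"])
      (simp_all add: simps)
  also have "nw_homotopic \<tau> \<dots> ([?B, ?D, ?F, ?G, ?E, ?A, ?C, ?E, ?D, ?A, ?C, ?G, ?F, ?B], fst)"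
    by (rule nw_homotopic_sym,
        rule nw_homotopic_move2[of "[?B, ?D]" ?F ?G "[?E, ?A, ?C, ?E, ?D, ?A, ?C]" "[?B]"])
      (simp_all add: simps)
  also have "nw_homotopic \<tau> \<dots> ([?B, ?D, ?F, ?E, ?G, ?A, ?E, ?C, ?D, ?A, ?G, ?C, ?F, ?B], fst)"
    by (rule nw_homotopic_sym,
        rule nw_homotopic_move3[of "[?B, ?D, ?F]" ?E ?G "[?A]" ?C "[?D, ?A]" "[?F, ?B]"])
      (simp_all add: simps)
  also have "nw_homotopic \<tau> \<dots> ([?B, ?D, ?F, ?E, ?E, ?C, ?D, ?C, ?F, ?B], fst)"
    by (rule nw_homotopic_move2[of "[?B, ?D, ?F, ?E]" ?G ?A "[?E, ?C, ?D]" "[?C, ?F, ?B]"])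
      (simp_all add: simps)
  also have "nw_homotopic \<tau> \<dots> ([?B, ?D, ?F, ?C, ?D, ?C, ?F, ?B], fst)"
    by (rule nw_homotopic_move1[of "[?B, ?D, ?F]" ?E "[?C, ?D, ?C, ?F, ?B]"]) (simp_all add: simps)
  also have "nw_homotopic \<tau> \<dots> ([?B, ?D, ?D, ?B], fst)"
    by (rule nw_homotopic_move2[of "[?B, ?D]" ?F ?C "[?D]" "[?B]"]) (simp_all add: simps)
  also have "nw_homotopic \<tau> \<dots> ([], fst)"
    by (rule nw_homotopic_move2[of "[]" ?B ?D "[]" "[]"]) (simp_all add: simps)
  finally show ?thesis by (simp add: contractible_def desing_aaa)
qed

lemma contractible_aaaa:
  assumes "\<tau> a = a" shows "contractible \<tau> [a, a, a, a]"
proof -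
  let ?P = "(a, 1::nat, 2::nat)" and ?Q = "(a, 1::nat, 3::nat)" and ?R = "(a, 1::nat, 4::nat)"
    and ?S = "(a, 2::nat, 3::nat)" and ?T = "(a, 2::nat, 4::nat)" and ?U = "(a, 3::nat, 4::nat)"
    and ?D = "(a, 0::nat, 1::nat)" and ?E = "(a, 0::nat, 2::nat)"
    and ?F = "(a, 0::nat, 3::nat)" and ?G = "(a, 0::nat, 4::nat)"
  note simps = is_nanoword_def assms
  have "nw_homotopic \<tau> ([?P, ?Q, ?R, ?P, ?S, ?T, ?Q, ?S, ?U, ?R, ?T, ?U], fst)
                       ([?Q, ?P, ?R, ?S, ?P, ?T, ?S, ?Q, ?U, ?R, ?T, ?U], fst)"
    by (rule nw_homotopic_move3[of "[]" ?P ?Q "[?R]" ?S "[?T]" "[?U, ?R, ?T, ?U]"])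
      (simp_all add: simps)
  also have "nw_homotopic \<tau> \<dots> ([?Q, ?R, ?P, ?S, ?T, ?P, ?S, ?Q, ?U, ?T, ?R, ?U], fst)"
    by (rule nw_homotopic_move3[of "[?Q]" ?P ?R "[?S]" ?T "[?S, ?Q, ?U]" "[?U]"])
      (simp_all add: simps)
  also have "nw_homotopic \<tau> \<dots> ([?Q, ?R, ?P, ?S, ?T, ?D, ?E, ?P, ?S, ?E, ?D, ?Q, ?U, ?T, ?R, ?U], fst)"
    by (rule nw_homotopic_sym,
        rule nw_homotopic_move2[of "[?Q, ?R, ?P, ?S, ?T]" ?D ?E "[?P, ?S]" "[?Q, ?U, ?T, ?R, ?U]"])
      (simp_all add: simps)
  also have "nw_homotopic \<tau> \<dots>
      ([?Q, ?R, ?F, ?G, ?P, ?S, ?T, ?D, ?E, ?P, ?S, ?E, ?G, ?F, ?D, ?Q, ?U, ?T, ?R, ?U], fst)"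
    by (rule nw_homotopic_sym, rule nw_homotopic_move2[of "[?Q, ?R]" ?F ?G
          "[?P, ?S, ?T, ?D, ?E, ?P, ?S, ?E]" "[?D, ?Q, ?U, ?T, ?R, ?U]"])
      (simp_all add: simps)
  also have "nw_homotopic \<tau> \<dots>
      ([?Q, ?R, ?F, ?P, ?G, ?S, ?T, ?D, ?P, ?E, ?S, ?G, ?E, ?F, ?D, ?Q, ?U, ?T, ?R, ?U], fst)"
    by (rule nw_homotopic_sym, rule nw_homotopic_move3[of "[?Q, ?R, ?F]" ?P ?G "[?S, ?T, ?D]" ?E
          "[?S]" "[?F, ?D, ?Q, ?U, ?T, ?R, ?U]"])
      (simp_all add: simps)
  also have "nw_homotopic \<tau> \<dots> ([?Q, ?R, ?F, ?P, ?T, ?D, ?P, ?E, ?E, ?F, ?D, ?Q, ?U, ?T, ?R, ?U], fst)"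
    by (rule nw_homotopic_move2[of "[?Q, ?R, ?F, ?P]" ?G ?S "[?T, ?D, ?P, ?E]"
          "[?E, ?F, ?D, ?Q, ?U, ?T, ?R, ?U]"])
      (simp_all add: simps)
  also have "nw_homotopic \<tau> \<dots> ([?Q, ?R, ?F, ?P, ?T, ?D, ?P, ?F, ?D, ?Q, ?U, ?T, ?R, ?U], fst)"
    by (rule nw_homotopic_move1[of "[?Q, ?R, ?F, ?P, ?T, ?D, ?P]" ?E "[?F, ?D, ?Q, ?U, ?T, ?R, ?U]"])
      (simp_all add: simps)
  also have "nw_homotopic \<tau> \<dots> ([?Q, ?R, ?T, ?D, ?D, ?Q, ?U, ?T, ?R, ?U], fst)"
    by (rule nw_homotopic_move2[of "[?Q, ?R]" ?F ?P "[?T, ?D]" "[?D, ?Q, ?U, ?T, ?R, ?U]"])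
      (simp_all add: simps)
  also have "nw_homotopic \<tau> \<dots> ([?Q, ?D, ?D, ?Q, ?U, ?U], fst)"
    by (rule nw_homotopic_move2[of "[?Q]" ?R ?T "[?D, ?D, ?Q, ?U]" "[?U]"]) (simp_all add: simps)
  also have "nw_homotopic \<tau> \<dots> ([?Q, ?D, ?D, ?Q], fst)"
    by (rule nw_homotopic_move1[of "[?Q, ?D, ?D, ?Q]" ?U "[]"]) (simp_all add: simps)
  also have "nw_homotopic \<tau> \<dots> ([], fst)"
    by (rule nw_homotopic_move2[of "[]" ?Q ?D "[]" "[]"]) (simp_all add: simps)
  finally show ?thesis by (simp add: contractible_def desing_aaaa)
qed

lemma contractible_abab:
  assumes "a \<noteq> b" "\<tau> a = b" "\<tau> b = a" shows "contractible \<tau> [a, b, a, b]"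
proof -
  let ?A = "(a, 1::nat, 2::nat)" and ?B = "(b, 1::nat, 2::nat)"
    and ?D = "(a, 0::nat, 1::nat)" and ?E = "(b, 0::nat, 1::nat)"
    and ?F = "(a, 0::nat, 2::nat)" and ?G = "(b, 0::nat, 2::nat)"
  note simps = is_nanoword_def assms assms(1)[symmetric]
  have "nw_homotopic \<tau> ([?A, ?B, ?A, ?B], fst) ([?D, ?E, ?A, ?B, ?E, ?D, ?A, ?B], fst)"
    by (rule nw_homotopic_sym, rule nw_homotopic_move2[of "[]" ?D ?E "[?A, ?B]" "[?A, ?B]"])
      (simp_all add: simps)
  also have "nw_homotopic \<tau> \<dots> ([?D, ?F, ?G, ?E, ?A, ?B, ?E, ?D, ?A, ?B, ?G, ?F], fst)"
    by (rule nw_homotopic_sym,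
        rule nw_homotopic_move2[of "[?D]" ?F ?G "[?E, ?A, ?B, ?E, ?D, ?A, ?B]" "[]"])
      (simp_all add: simps)
  also have "nw_homotopic \<tau> \<dots> ([?D, ?F, ?E, ?G, ?A, ?E, ?B, ?D, ?A, ?G, ?B, ?F], fst)"
    by (rule nw_homotopic_sym,
        rule nw_homotopic_move3[of "[?D, ?F]" ?E ?G "[?A]" ?B "[?D, ?A]" "[?F]"])
      (simp_all add: simps)
  also have "nw_homotopic \<tau> \<dots> ([?D, ?F, ?E, ?E, ?B, ?D, ?B, ?F], fst)"
    by (rule nw_homotopic_move2[of "[?D, ?F, ?E]" ?G ?A "[?E, ?B, ?D]" "[?B, ?F]"])
      (simp_all add: simps)
  also have "nw_homotopic \<tau> \<dots> ([?D, ?F, ?B, ?D, ?B, ?F], fst)"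
    by (rule nw_homotopic_move1[of "[?D, ?F]" ?E "[?B, ?D, ?B, ?F]"]) (simp_all add: simps)
  also have "nw_homotopic \<tau> \<dots> ([?D, ?D], fst)"
    by (rule nw_homotopic_move2[of "[?D]" ?F ?B "[?D]" "[]"]) (simp_all add: simps)
  also have "nw_homotopic \<tau> \<dots> ([], fst)"
    by (rule nw_homotopic_move1[of "[]" ?D "[]"]) (simp_all add: simps)
  finally show ?thesis by (simp add: contractible_def desing_abab assms)
qed

section \<open>Invariants from linking signs\<close>

definition link_sign :: "'b list \<Rightarrow> 'b \<Rightarrow> 'b \<Rightarrow> int" where
  "link_sign w X Y =
     (if filter (\<lambda>c. c = X \<or> c = Y) w = [X, Y, X, Y] then 1
      else if filter (\<lambda>c. c = X \<or> c = Y) w = [Y, X, Y, X] then -1 else 0)"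

lemma filter_pair_Nil [simp]: "X \<notin> set u \<Longrightarrow> Y \<notin> set u \<Longrightarrow> filter (\<lambda>c. c = X \<or> c = Y) u = []"
  by (induction u) auto

lemma link_sign_removeAll: "Z \<noteq> X \<Longrightarrow> Z \<noteq> Y \<Longrightarrow> link_sign (removeAll Z w) X Y = link_sign w X Y"
proof -
  assume "Z \<noteq> X" "Z \<noteq> Y"
  then have "filter (\<lambda>c. c = X \<or> c = Y) (removeAll Z w) = filter (\<lambda>c. c = X \<or> c = Y) w"
    by (auto simp: removeAll_filter_not_eq filter_filter intro: filter_cong)
  then show ?thesis by (simp add: link_sign_def)
qed

lemma link_sign_swap: "X \<noteq> Y \<Longrightarrow> link_sign w Y X = - link_sign w X Y"
proof -
  assume "X \<noteq> Y"
  moreover have "filter (\<lambda>c. c = Y \<or> c = X) w = filter (\<lambda>c. c = X \<or> c = Y) w"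
    by (metis disj_commute)
  ultimately show ?thesis by (simp add: link_sign_def)
qed

lemma link_sign_self: "count_list w X = 2 \<Longrightarrow> link_sign w X X = 0"
proof -
  assume "count_list w X = 2"
  moreover have "filter (\<lambda>c. c = X \<or> c = X) w = filter ((=) X) w"
    by (metis (mono_tags))
  ultimately have "length (filter (\<lambda>c. c = X \<or> c = X) w) = 2"
    by (simp add: count_list_eq_length_filter)
  then show ?thesis by (auto simp: link_sign_def)
qed

lemma filter_replicate_letter: "A \<notin> set u \<Longrightarrow> filter (\<lambda>c. c = C \<or> c = A) u = replicate (count_list u C) C"
  by (induction u) auto

lemma replicate_split_eq: "C \<noteq> A \<Longrightarrow>
  (replicate i C @ A # r = replicate i' C @ A # r') \<longleftrightarrow> (i = i' \<and> r = r')"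
proof (induction i arbitrary: i')
  case 0 then show ?case by (cases i') auto
next
  case (Suc i) then show ?case by (cases i') auto
qed

lemma replicate_eq_singleton_iff: "replicate r C = [C] \<longleftrightarrow> r = 1"
  by (cases r) auto

definition crossing_sign :: "nat \<Rightarrow> nat \<Rightarrow> nat \<Rightarrow> int" where
  "crossing_sign i j k = (if (i, j, k) = (1, 1, 0) then 1 else if (i, j, k) = (0, 1, 1) then -1 else 0)"

lemma link_sign_two_occurrences:
  assumes "A \<notin> set u" "A \<notin> set v" "A \<notin> set s" "C \<noteq> A"
  shows "link_sign (u @ [A] @ v @ [A] @ s) C A
           = crossing_sign (count_list u C) (count_list v C) (count_list s C)"
proof -
  have "filter (\<lambda>c. c = C \<or> c = A) (u @ [A] @ v @ [A] @ s)
      = replicate (count_list u C) C @ A # replicate (count_list v C) C @ A # replicate (count_list s C) C"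
    using assms by (simp add: filter_replicate_letter)
  moreover have "replicate i C @ A # replicate j C @ A # replicate k C = [C, A, C, A]
      \<longleftrightarrow> (i, j, k) = (1, 1, 0)" for i j k
    using replicate_split_eq[OF \<open>C \<noteq> A\<close>, of i "replicate j C @ A # replicate k C" 1 "[C, A]"]
      replicate_split_eq[OF \<open>C \<noteq> A\<close>, of j "replicate k C" 1 "[]"] by auto
  moreover have "replicate i C @ A # replicate j C @ A # replicate k C = [A, C, A, C]
      \<longleftrightarrow> (i, j, k) = (0, 1, 1)" for i j k
    using replicate_split_eq[OF \<open>C \<noteq> A\<close>, of i "replicate j C @ A # replicate k C" 0 "[C, A, C]"]
      replicate_split_eq[OF \<open>C \<noteq> A\<close>, of j "replicate k C" 1 "[C]"]
    by (auto simp: replicate_eq_singleton_iff)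
  ultimately show ?thesis by (simp add: link_sign_def crossing_sign_def)
qed

definition linking_number :: "('a \<Rightarrow> int) \<Rightarrow> 'b list \<times> ('b \<Rightarrow> 'a) \<Rightarrow> 'b \<Rightarrow> int" where
  "linking_number \<phi> N X = (\<Sum>Y\<in>set (fst N). link_sign (fst N) X Y * \<phi> (snd N Y))"

definition linking_invariant ::
    "('a \<Rightarrow> int) \<Rightarrow> ('a \<Rightarrow> int \<Rightarrow> 'g::ab_group_add) \<Rightarrow> 'b list \<times> ('b \<Rightarrow> 'a) \<Rightarrow> 'g" where
  "linking_invariant \<phi> \<psi> N = (\<Sum>X\<in>set (fst N). \<psi> (snd N X) (linking_number \<phi> N X))"

definition crossing_invariant ::
    "('a \<Rightarrow> 'r::ring) \<Rightarrow> ('a \<Rightarrow> 'r) \<Rightarrow> 'b list \<times> ('b \<Rightarrow> 'a) \<Rightarrow> 'r" where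
  "crossing_invariant u v N = (\<Sum>X\<in>set (fst N). \<Sum>Y\<in>set (fst N).
      if link_sign (fst N) X Y = 1 then u (snd N X) * v (snd N Y) else 0)"

lemma nanoword_count: "is_nanoword (w, p) \<Longrightarrow> X \<in> set w \<Longrightarrow> count_list w X = 2"
  by (simp add: is_nanoword_def)

lemma nanoword_move1_letter:
  assumes "is_nanoword (x @ [A, A] @ y, p)" shows "A \<notin> set (x @ y)"
  using nanoword_count[OF assms, of A] by (auto simp: count_list_0_iff[symmetric])

lemma link_sign_move1:
  assumes nw: "is_nanoword (x @ [A, A] @ y, p)"
  shows "link_sign (x @ [A, A] @ y) C A = 0" "link_sign (x @ [A, A] @ y) A C = 0"
    and "X \<in> set (x @ y) \<Longrightarrow> Y \<in> set (x @ y)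
           \<Longrightarrow> link_sign (x @ [A, A] @ y) X Y = link_sign (x @ y) X Y"
proof -
  have count: "count_list (x @ [A, A] @ y) A = 2" using nanoword_count[OF nw, of A] by simp
  have A: "A \<notin> set (x @ y)" by (rule nanoword_move1_letter[OF nw])
  then have "link_sign (x @ [A] @ [] @ [A] @ y) C A = 0" if "C \<noteq> A"
    using link_sign_two_occurrences[of A x "[]" y C] that by (simp add: crossing_sign_def)
  then show "link_sign (x @ [A, A] @ y) C A = 0" "link_sign (x @ [A, A] @ y) A C = 0"
    using link_sign_self[OF count] link_sign_swap[of C A "x @ [A, A] @ y"] by (cases "C = A"; simp)+
  have "removeAll A (x @ [A, A] @ y) = x @ y"
    using A by simp
  moreover have "A \<noteq> X" "A \<noteq> Y" if "X \<in> set (x @ y)" "Y \<in> set (x @ y)" for X Y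
    using that A by auto
  ultimately show "X \<in> set (x @ y) \<Longrightarrow> Y \<in> set (x @ y)
      \<Longrightarrow> link_sign (x @ [A, A] @ y) X Y = link_sign (x @ y) X Y"
    by (metis link_sign_removeAll)
qed

lemma linking_invariant_move1:
  assumes nw: "is_nanoword (x @ [A, A] @ y, p)" and \<psi>0: "\<And>a. \<psi> a 0 = 0"
  shows "linking_invariant \<phi> \<psi> (x @ [A, A] @ y, p) = linking_invariant \<phi> \<psi> (x @ y, p)"
proof -
  define w where "w = x @ [A, A] @ y"
  note signs = link_sign_move1[OF nw, folded w_def]
  have A: "A \<notin> set (x @ y)" by (rule nanoword_move1_letter[OF nw])
  have set_w: "set w = insert A (set (x @ y))" by (auto simp: w_def)
  have "linking_number \<phi> (w, p) X = linking_number \<phi> (x @ y, p) X" if "X \<in> set (x @ y)" for X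
  proof -
    have "linking_number \<phi> (w, p) X = (\<Sum>Y\<in>set (x @ y). link_sign w X Y * \<phi> (p Y))"
      using A by (simp add: linking_number_def set_w signs(1))
    also have "\<dots> = linking_number \<phi> (x @ y, p) X"
      unfolding linking_number_def using that by (auto simp: signs(3) intro!: sum.cong)
    finally show ?thesis .
  qed
  moreover have "linking_number \<phi> (w, p) A = 0"
    by (simp add: linking_number_def signs(2))
  ultimately have "linking_invariant \<phi> \<psi> (w, p) = linking_invariant \<phi> \<psi> (x @ y, p)"
    using A \<psi>0 by (simp add: linking_invariant_def set_w)
  then show ?thesis unfolding w_def .
qed

lemma crossing_invariant_move1:
  assumes nw: "is_nanoword (x @ [A, A] @ y, p)"
  shows "crossing_invariant u v (x @ [A, A] @ y, p) = crossing_invariant u v (x @ y, p)"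
proof -
  define w where "w = x @ [A, A] @ y"
  note signs = link_sign_move1[OF nw, folded w_def]
  have A: "A \<notin> set (x @ y)" by (rule nanoword_move1_letter[OF nw])
  have set_w: "set w = insert A (set (x @ y))" by (auto simp: w_def)
  have "crossing_invariant u v (w, p) = (\<Sum>X\<in>set (x @ y). \<Sum>Y\<in>set (x @ y).
      if link_sign w X Y = 1 then u (p X) * v (p Y) else 0)"
    using A unfolding crossing_invariant_def fst_conv snd_conv by (simp add: set_w signs(1,2))
  also have "\<dots> = crossing_invariant u v (x @ y, p)"
    unfolding crossing_invariant_def by (auto simp: signs(3) intro!: sum.cong)
  finally show ?thesis unfolding w_def .
qed

lemma nanoword_move2_letters:
  assumes "is_nanoword (x @ [A, B] @ y @ [B, A] @ z, p)"
  shows "A \<noteq> B" "A \<notin> set (x @ y @ z)" "B \<notin> set (x @ y @ z)"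
proof -
  have count: "count_list (x @ [A, B] @ y @ [B, A] @ z) A = 2"
    "count_list (x @ [A, B] @ y @ [B, A] @ z) B = 2"
    using nanoword_count[OF assms, of A] nanoword_count[OF assms, of B] by simp_all
  then show "A \<noteq> B" by auto
  with count show "A \<notin> set (x @ y @ z)" "B \<notin> set (x @ y @ z)"
    by (auto simp: count_list_0_iff[symmetric])
qed

lemma link_sign_move2:
  assumes nw: "is_nanoword (x @ [A, B] @ y @ [B, A] @ z, p)"
  defines "w \<equiv> x @ [A, B] @ y @ [B, A] @ z"
  shows "C \<in> set (x @ y @ z) \<Longrightarrow> link_sign w C A = link_sign w C B"
    and "C \<in> set (x @ y @ z) \<Longrightarrow> link_sign w A C = link_sign w B C"
    and "link_sign w A B = 0" "link_sign w B A = 0" "link_sign w A A = 0" "link_sign w B B = 0"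
    and "X \<in> set (x @ y @ z) \<Longrightarrow> Y \<in> set (x @ y @ z)
           \<Longrightarrow> link_sign w X Y = link_sign (x @ y @ z) X Y"
proof -
  have "A \<noteq> B" and A: "A \<notin> set (x @ y @ z)" and B: "B \<notin> set (x @ y @ z)"
    using nanoword_move2_letters[OF nw] by simp_all
  have w_A: "w = x @ [A] @ (B # y @ [B]) @ [A] @ z" and w_B: "w = (x @ [A]) @ [B] @ y @ [B] @ (A # z)"
    by (simp_all add: w_def)
  have "link_sign w C A = crossing_sign (count_list x C) (count_list y C) (count_list z C)"
    and "link_sign w C B = crossing_sign (count_list x C) (count_list y C) (count_list z C)"
    if "C \<in> set (x @ y @ z)" for C
  proof -
    have "C \<noteq> A" "C \<noteq> B" "A \<noteq> C" "B \<noteq> C" using that A B by auto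
    then show "link_sign w C A = crossing_sign (count_list x C) (count_list y C) (count_list z C)"
      and "link_sign w C B = crossing_sign (count_list x C) (count_list y C) (count_list z C)"
      using link_sign_two_occurrences[of A x "B # y @ [B]" z C]
        link_sign_two_occurrences[of B "x @ [A]" y "A # z" C] A B \<open>A \<noteq> B\<close>
      by (simp_all add: w_A w_B)
  qed
  then show sign_CA: "C \<in> set (x @ y @ z) \<Longrightarrow> link_sign w C A = link_sign w C B" for C
    by simp
  show "link_sign w A C = link_sign w B C" if "C \<in> set (x @ y @ z)"
  proof -
    have "C \<noteq> A" "C \<noteq> B" using that A B by auto
    then show ?thesis using sign_CA[OF that] link_sign_swap[of C A w] link_sign_swap[of C B w] by simp
  qed
  show "link_sign w B A = 0"
    using link_sign_two_occurrences[of A x "B # y @ [B]" z B] A B \<open>A \<noteq> B\<close>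
    by (simp add: w_A crossing_sign_def)
  then show "link_sign w A B = 0"
    using link_sign_swap[of B A w] \<open>A \<noteq> B\<close> by simp
  have "count_list w A = 2" "count_list w B = 2"
    using nanoword_count[OF nw, of A] nanoword_count[OF nw, of B] by (simp_all add: w_def)
  then show "link_sign w A A = 0" "link_sign w B B = 0"
    by (simp_all add: link_sign_self)
  have "removeAll A (removeAll B w) = x @ y @ z"
    using A B \<open>A \<noteq> B\<close> by (simp add: w_def)
  moreover have "A \<noteq> X" "B \<noteq> X" "A \<noteq> Y" "B \<noteq> Y"
    if "X \<in> set (x @ y @ z)" "Y \<in> set (x @ y @ z)" for X Y
    using that A B by auto
  ultimately show "X \<in> set (x @ y @ z) \<Longrightarrow> Y \<in> set (x @ y @ z)
      \<Longrightarrow> link_sign w X Y = link_sign (x @ y @ z) X Y"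
    by (metis link_sign_removeAll)
qed

lemma linking_invariant_move2:
  assumes nw: "is_nanoword (x @ [A, B] @ y @ [B, A] @ z, p)" and pB: "p B = \<tau> (p A)"
    and \<phi>: "\<And>a. \<phi> (\<tau> a) = - \<phi> a" and \<psi>: "\<And>a l. \<psi> (\<tau> a) l = - \<psi> a l"
  shows "linking_invariant \<phi> \<psi> (x @ [A, B] @ y @ [B, A] @ z, p)
       = linking_invariant \<phi> \<psi> (x @ y @ z, p)"
proof -
  define w where "w = x @ [A, B] @ y @ [B, A] @ z"
  define S where "S = set (x @ y @ z)"
  note signs = link_sign_move2[OF nw, folded w_def S_def]
  have "A \<noteq> B" and AB: "A \<notin> S" "B \<notin> S"
    using nanoword_move2_letters[OF nw] by (simp_all add: S_def)
  have "finite S" by (simp add: S_def)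
  have set_w: "set w = insert A (insert B S)" by (auto simp: w_def S_def)
  have "linking_number \<phi> (w, p) X = linking_number \<phi> (x @ y @ z, p) X" if "X \<in> S" for X
  proof -
    have "linking_number \<phi> (w, p) X = link_sign w X A * \<phi> (p A) + link_sign w X B * \<phi> (p B)
        + (\<Sum>Y\<in>S. link_sign w X Y * \<phi> (p Y))"
      using AB \<open>A \<noteq> B\<close> \<open>finite S\<close> by (simp add: linking_number_def set_w add.assoc)
    also have "\<dots> = linking_number \<phi> (x @ y @ z, p) X"
      using that unfolding linking_number_def fst_conv snd_conv S_def[symmetric]
      by (simp add: signs(1,7) pB \<phi> cong: sum.cong_simp)
    finally show ?thesis .
  qed
  moreover have "linking_number \<phi> (w, p) A = (\<Sum>Y\<in>S. link_sign w A Y * \<phi> (p Y))"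
    using AB \<open>A \<noteq> B\<close> \<open>finite S\<close> by (simp add: linking_number_def set_w signs(3,5))
  moreover have "linking_number \<phi> (w, p) B = (\<Sum>Y\<in>S. link_sign w A Y * \<phi> (p Y))"
    using AB \<open>A \<noteq> B\<close> \<open>finite S\<close>
    by (simp add: linking_number_def set_w signs(2,4,6) cong: sum.cong_simp)
  ultimately have "linking_invariant \<phi> \<psi> (w, p) = linking_invariant \<phi> \<psi> (x @ y @ z, p)"
    using AB \<open>A \<noteq> B\<close> \<open>finite S\<close>
    unfolding linking_invariant_def fst_conv snd_conv set_w S_def[symmetric]
    by (simp add: pB \<psi> cong: sum.cong_simp)
  then show ?thesis unfolding w_def .
qed

lemma crossing_invariant_move2:
  assumes nw: "is_nanoword (x @ [A, B] @ y @ [B, A] @ z, p)" and pB: "p B = \<tau> (p A)"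
    and u: "\<And>a. u (\<tau> a) = - u a" and v: "\<And>a. v (\<tau> a) = - v a"
  shows "crossing_invariant u v (x @ [A, B] @ y @ [B, A] @ z, p)
       = crossing_invariant u v (x @ y @ z, p)"
proof -
  define w where "w = x @ [A, B] @ y @ [B, A] @ z"
  define S where "S = set (x @ y @ z)"
  note signs = link_sign_move2[OF nw, folded w_def S_def]
  have "A \<noteq> B" and AB: "A \<notin> S" "B \<notin> S"
    using nanoword_move2_letters[OF nw] by (simp_all add: S_def)
  have "finite S" by (simp add: S_def)
  have set_w: "set w = insert A (insert B S)" by (auto simp: w_def S_def)
  define F where "F X Y = (if link_sign w X Y = 1 then u (p X) * v (p Y) else 0)" for X Y
  have "F A Y + F B Y = 0" "F Y A + F Y B = 0" if "Y \<in> S" for Y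
    using signs(1,2)[OF that] pB u v by (simp_all add: F_def)
  moreover have "F A A = 0" "F A B = 0" "F B A = 0" "F B B = 0"
    by (simp_all add: F_def signs(3-6))
  moreover have "(\<Sum>X\<in>set w. \<Sum>Y\<in>set w. F X Y) = (F A A + F A B + F B A + F B B)
      + (\<Sum>Y\<in>S. F A Y + F B Y) + (\<Sum>X\<in>S. F X A + F X B) + (\<Sum>X\<in>S. \<Sum>Y\<in>S. F X Y)"
    using AB \<open>A \<noteq> B\<close> \<open>finite S\<close> by (simp add: set_w sum.distrib algebra_simps)
  ultimately have "(\<Sum>X\<in>set w. \<Sum>Y\<in>set w. F X Y) = (\<Sum>X\<in>S. \<Sum>Y\<in>S. F X Y)"
    by simp
  also have "\<dots> = crossing_invariant u v (x @ y @ z, p)"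
    unfolding crossing_invariant_def fst_conv snd_conv S_def[symmetric]
    by (simp add: F_def signs(7) cong: sum.cong_simp)
  finally have "crossing_invariant u v (w, p) = crossing_invariant u v (x @ y @ z, p)"
    unfolding crossing_invariant_def fst_conv snd_conv F_def .
  then show ?thesis unfolding w_def .
qed

lemma nanoword_move3_letters:
  assumes "is_nanoword (x @ [A, B] @ y @ [A, C] @ z @ [B, C] @ t, p)" "distinct [A, B, C]"
  shows "A \<notin> set (x @ y @ z @ t)" "B \<notin> set (x @ y @ z @ t)" "C \<notin> set (x @ y @ z @ t)"
  using nanoword_count[OF assms(1), of A] nanoword_count[OF assms(1), of B]
    nanoword_count[OF assms(1), of C] assms(2)
  by (auto simp: count_list_0_iff[symmetric])

lemma filter_move3:
  assumes "\<not> (P A \<and> P B)" "\<not> (P A \<and> P C)" "\<not> (P B \<and> P C)"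
  shows "filter P (x @ [A, B] @ y @ [A, C] @ z @ [B, C] @ t)
       = filter P (x @ [B, A] @ y @ [C, A] @ z @ [C, B] @ t)"
  using assms by (cases "P A"; cases "P B"; cases "P C") simp_all

lemma link_sign_move3:
  assumes nw: "is_nanoword (x @ [A, B] @ y @ [A, C] @ z @ [B, C] @ t, p)"
    and dist: "distinct [A, B, C]"
  defines "w \<equiv> x @ [A, B] @ y @ [A, C] @ z @ [B, C] @ t"
    and "w' \<equiv> x @ [B, A] @ y @ [C, A] @ z @ [C, B] @ t"
  shows "\<not> (X \<in> {A, B, C} \<and> Y \<in> {A, B, C}) \<Longrightarrow> link_sign w X Y = link_sign w' X Y"
    and "X \<in> {A, B, C} \<Longrightarrow>
           (\<Sum>Y\<in>{A, B, C}. link_sign w X Y) = (\<Sum>Y\<in>{A, B, C}. link_sign w' X Y)"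
proof -
  show "link_sign w X Y = link_sign w' X Y" if "\<not> (X \<in> {A, B, C} \<and> Y \<in> {A, B, C})"
  proof -
    have "filter (\<lambda>c. c = X \<or> c = Y) w = filter (\<lambda>c. c = X \<or> c = Y) w'"
      unfolding w_def w'_def using that dist by (intro filter_move3) auto
    then show ?thesis by (simp add: link_sign_def)
  qed
  have letters: "A \<notin> set (x @ y @ z @ t)" "B \<notin> set (x @ y @ z @ t)" "C \<notin> set (x @ y @ z @ t)"
    using nanoword_move3_letters[OF nw dist] by simp_all
  moreover have "A \<noteq> B" "A \<noteq> C" "B \<noteq> C" "B \<noteq> A" "C \<noteq> A" "C \<noteq> B"
    using dist by auto
  ultimately have
    "link_sign w A B = 1" "link_sign w A C = 0" "link_sign w B A = -1"
    "link_sign w B C = 1" "link_sign w C A = 0" "link_sign w C B = -1"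
    "link_sign w' A B = 0" "link_sign w' A C = 1" "link_sign w' B A = 0"
    "link_sign w' B C = 0" "link_sign w' C A = -1" "link_sign w' C B = 0"
    by (simp_all add: link_sign_def w_def w'_def)
  moreover have "count_list w X = 2" "count_list w' X = 2" if "X \<in> {A, B, C}" for X
    using that letters dist by (auto simp: w_def w'_def)
  ultimately show "X \<in> {A, B, C} \<Longrightarrow>
      (\<Sum>Y\<in>{A, B, C}. link_sign w X Y) = (\<Sum>Y\<in>{A, B, C}. link_sign w' X Y)"
    using dist by (auto simp: link_sign_self)
qed

lemma linking_invariant_move3:
  assumes nw: "is_nanoword (x @ [A, B] @ y @ [A, C] @ z @ [B, C] @ t, p)"
    and dist: "distinct [A, B, C]" and pAB: "p A = p B" and pBC: "p B = p C"
  shows "linking_invariant \<phi> \<psi> (x @ [A, B] @ y @ [A, C] @ z @ [B, C] @ t, p)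
       = linking_invariant \<phi> \<psi> (x @ [B, A] @ y @ [C, A] @ z @ [C, B] @ t, p)"
proof -
  define w where "w = x @ [A, B] @ y @ [A, C] @ z @ [B, C] @ t"
  define w' where "w' = x @ [B, A] @ y @ [C, A] @ z @ [C, B] @ t"
  define S where "S = set (x @ y @ z @ t)"
  note signs = link_sign_move3[OF nw dist, folded w_def w'_def]
  have T: "{A, B, C} \<inter> S = {}"
    using nanoword_move3_letters[OF nw dist] by (auto simp: S_def)
  have set_w: "set w = {A, B, C} \<union> S" and set_w': "set w' = {A, B, C} \<union> S"
    by (auto simp: w_def w'_def S_def)
  have split: "linking_number \<phi> (v, p) X
      = (\<Sum>Y\<in>{A, B, C}. link_sign v X Y) * \<phi> (p A) + (\<Sum>Y\<in>S. link_sign v X Y * \<phi> (p Y))"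
    if "set v = {A, B, C} \<union> S" for v X
  proof -
    have "linking_number \<phi> (v, p) X
        = (\<Sum>Y\<in>{A, B, C}. link_sign v X Y * \<phi> (p Y)) + (\<Sum>Y\<in>S. link_sign v X Y * \<phi> (p Y))"
      unfolding linking_number_def fst_conv snd_conv that
      using T by (intro sum.union_disjoint) (simp_all add: S_def)
    moreover have "(\<Sum>Y\<in>{A, B, C}. link_sign v X Y * \<phi> (p Y))
        = (\<Sum>Y\<in>{A, B, C}. link_sign v X Y) * \<phi> (p A)"
      unfolding sum_distrib_right using pAB pBC by (intro sum.cong) auto
    ultimately show ?thesis by simp
  qed
  have "(\<Sum>Y\<in>{A, B, C}. link_sign w X Y) = (\<Sum>Y\<in>{A, B, C}. link_sign w' X Y)" for X
    using signs by (cases "X \<in> {A, B, C}") (auto intro: sum.cong)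
  moreover have "link_sign w X Y = link_sign w' X Y" if "Y \<in> S" for X Y
    using signs(1) that T by blast
  ultimately have "linking_number \<phi> (w, p) X = linking_number \<phi> (w', p) X" for X
    by (simp add: split[OF set_w] split[OF set_w'] cong: sum.cong_simp)
  then have "linking_invariant \<phi> \<psi> (w, p) = linking_invariant \<phi> \<psi> (w', p)"
    by (simp add: linking_invariant_def set_w set_w')
  then show ?thesis unfolding w_def w'_def .
qed

lemma crossing_invariant_move3:
  assumes nw: "is_nanoword (x @ [A, B] @ y @ [A, C] @ z @ [B, C] @ t, p)"
    and dist: "distinct [A, B, C]" and pAB: "p A = p B" and pBC: "p B = p C"
    and uv: "\<And>a. u a * v a = 0"
  shows "crossing_invariant u v (x @ [A, B] @ y @ [A, C] @ z @ [B, C] @ t, p)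
       = crossing_invariant u v (x @ [B, A] @ y @ [C, A] @ z @ [C, B] @ t, p)"
proof -
  define w where "w = x @ [A, B] @ y @ [A, C] @ z @ [B, C] @ t"
  define w' where "w' = x @ [B, A] @ y @ [C, A] @ z @ [C, B] @ t"
  note signs = link_sign_move3(1)[OF nw dist, folded w_def w'_def]
  have "set w' = set w" by (auto simp: w_def w'_def)
  moreover have "(if link_sign w X Y = 1 then u (p X) * v (p Y) else 0)
      = (if link_sign w' X Y = 1 then u (p X) * v (p Y) else 0)" for X Y
  proof (cases "X \<in> {A, B, C} \<and> Y \<in> {A, B, C}")
    case True
    then have "p X = p A" "p Y = p A" using pAB pBC by auto
    then show ?thesis using uv by simp
  next
    case False
    then show ?thesis using signs by simp
  qed
  ultimately have "crossing_invariant u v (w, p) = crossing_invariant u v (w', p)"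
    unfolding crossing_invariant_def fst_conv snd_conv by simp
  then show ?thesis unfolding w_def w'_def .
qed

lemma link_sign_map:
  assumes inj: "inj_on f (set w)" and "X \<in> set w" "Y \<in> set w"
  shows "link_sign (map f w) (f X) (f Y) = link_sign w X Y"
proof -
  let ?q = "filter (\<lambda>c. c = X \<or> c = Y) w"
  have "filter (\<lambda>c. f c = f X \<or> f c = f Y) w = ?q"
    using inj assms(2,3) by (intro filter_cong) (auto dest: inj_onD)
  then have "filter (\<lambda>c. c = f X \<or> c = f Y) (map f w) = map f ?q"
    by (simp add: filter_map comp_def)
  moreover have map_eq: "map f ?q = map f L \<longleftrightarrow> ?q = L" if "set L \<subseteq> set w" for L
  proof -
    have "set ?q \<union> set L \<subseteq> set w" using that by auto
    then show ?thesis by (intro inj_on_map_eq_map inj_on_subset[OF inj])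
  qed
  ultimately show ?thesis
    using map_eq[of "[X, Y, X, Y]"] map_eq[of "[Y, X, Y, X]"] assms(2,3) by (simp add: link_sign_def)
qed

lemma linking_invariant_iso:
  assumes inj: "inj_on f (set w)" and q: "\<And>A. A \<in> set w \<Longrightarrow> q (f A) = p A"
  shows "linking_invariant \<phi> \<psi> (map f w, q) = linking_invariant \<phi> \<psi> (w, p)"
proof -
  have "linking_number \<phi> (map f w, q) (f X) = linking_number \<phi> (w, p) X" if "X \<in> set w" for X
    unfolding linking_number_def using that inj q
    by (simp add: sum.reindex link_sign_map cong: sum.cong_simp)
  then show ?thesis
    unfolding linking_invariant_def using inj q by (simp add: sum.reindex cong: sum.cong_simp)
qed

lemma crossing_invariant_iso:
  assumes inj: "inj_on f (set w)" and q: "\<And>A. A \<in> set w \<Longrightarrow> q (f A) = p A"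
  shows "crossing_invariant u v (map f w, q) = crossing_invariant u v (w, p)"
  unfolding crossing_invariant_def fst_conv snd_conv set_map using inj q
  by (simp add: sum.reindex link_sign_map cong: sum.cong_simp if_cong)

lemma equivclp_invariant:
  assumes "\<And>x y. r x y \<Longrightarrow> f x = f y" and "equivclp r a b"
  shows "f a = f b"
  using assms(2) by (induction rule: equivclp_induct) (auto dest: assms(1))

lemma linking_invariant_homotopic:
  assumes "nw_homotopic \<tau> N M"
    and \<phi>: "\<And>a. \<phi> (\<tau> a) = - \<phi> a"
    and \<psi>: "\<And>a l. \<psi> (\<tau> a) l = - \<psi> a l" and \<psi>0: "\<And>a. \<psi> a 0 = 0"
  shows "linking_invariant \<phi> \<psi> N = linking_invariant \<phi> \<psi> M"
proof (rule equivclp_invariant[where r = "nw_step \<tau>"])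
  show "equivclp (nw_step \<tau>) N M" using assms(1) by (simp add: nw_homotopic_eq_equivclp)
next
  fix N M assume "nw_step \<tau> N M"
  then show "linking_invariant \<phi> \<psi> N = linking_invariant \<phi> \<psi> M"
  proof cases
    case iso then show ?thesis by (simp add: linking_invariant_iso)
  next
    case (move1 x A y p)
    show ?thesis unfolding move1(1,2) using move1(3) \<psi>0 by (rule linking_invariant_move1)
  next
    case (move2 x A B y z p)
    show ?thesis unfolding move2(1,2) using move2(3,4) \<phi> \<psi> by (rule linking_invariant_move2)
  next
    case (move3 x A B y C z t p)
    show ?thesis unfolding move3(1,2) using move3(3-6) by (rule linking_invariant_move3)
  qed
qed

lemma crossing_invariant_homotopic:
  assumes "nw_homotopic \<tau> N M"
    and u: "\<And>a. u (\<tau> a) = - u a" and v: "\<And>a. v (\<tau> a) = - v a" and uv: "\<And>a. u a * v a = 0"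
  shows "crossing_invariant u v N = crossing_invariant u v M"
proof (rule equivclp_invariant[where r = "nw_step \<tau>"])
  show "equivclp (nw_step \<tau>) N M" using assms(1) by (simp add: nw_homotopic_eq_equivclp)
next
  fix N M assume "nw_step \<tau> N M"
  then show "crossing_invariant u v N = crossing_invariant u v M"
  proof cases
    case iso then show ?thesis by (simp add: crossing_invariant_iso)
  next
    case (move1 x A y p)
    show ?thesis unfolding move1(1,2) using move1(3) by (rule crossing_invariant_move1)
  next
    case (move2 x A B y z p)
    show ?thesis unfolding move2(1,2) using move2(3,4) u v by (rule crossing_invariant_move2)
  next
    case (move3 x A B y C z t p)
    show ?thesis unfolding move3(1,2) using move3(3-6) uv by (rule crossing_invariant_move3)
  qed
qed

section \<open>Invariants of short words\<close>

lemma desing_Nil [simp]: "desing [] = []"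
  by (simp add: desing_def)

lemma linking_invariant_Nil [simp]: "linking_invariant \<phi> \<psi> ([], p) = 0"
  by (simp add: linking_invariant_def)

lemma crossing_invariant_Nil [simp]: "crossing_invariant u v ([], p) = 0"
  by (simp add: crossing_invariant_def)

lemma contractible_iff_word_homotopic_Nil: "contractible \<tau> w \<longleftrightarrow> word_homotopic \<tau> w []"
  by (simp add: contractible_def word_homotopic_def desing_def)

lemma word_homotopic_refl: "word_homotopic \<tau> w w"
  by (simp add: word_homotopic_def nw_homotopic_refl)

lemma word_homotopic_sym: "word_homotopic \<tau> u v \<Longrightarrow> word_homotopic \<tau> v u"
  by (simp add: word_homotopic_def nw_homotopic_sym)

lemma linking_invariant_desing_aaa:
  "linking_invariant \<phi> \<psi> (desing [a, a, a], fst) = \<psi> a (\<phi> a) + \<psi> a 0 + \<psi> a (- \<phi> a)"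
proof -
  have "set (desing [a, a, a]) = {(a, 1, 2), (a, 1, 3), (a, 2, 3)}"
    by (auto simp: desing_aaa)
  then show ?thesis
    unfolding linking_invariant_def linking_number_def fst_conv snd_conv
    by (simp add: desing_aaa link_sign_def add.assoc)
qed

lemma linking_invariant_desing_aaaa:
  "linking_invariant \<phi> \<psi> (desing [a, a, a, a], fst)
     = \<psi> a (2 * \<phi> a) + \<psi> a (2 * \<phi> a) + \<psi> a 0 + \<psi> a 0
       + \<psi> a (- 2 * \<phi> a) + \<psi> a (- 2 * \<phi> a)"
proof -
  have "set (desing [a, a, a, a]) = {(a, 1, 2), (a, 1, 3), (a, 1, 4), (a, 2, 3), (a, 2, 4), (a, 3, 4)}"
    by (auto simp: desing_aaaa)
  then show ?thesis
    unfolding linking_invariant_def linking_number_def fst_conv snd_conv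
    by (simp add: desing_aaaa link_sign_def add.assoc)
qed

lemma linking_invariant_desing_abab:
  assumes "a \<noteq> b"
  shows "linking_invariant \<phi> \<psi> (desing [a, b, a, b], fst) = \<psi> a (\<phi> b) + \<psi> b (- \<phi> a)"
proof -
  have "set (desing [a, b, a, b]) = {(a, 1, 2), (b, 1, 2)}"
    using assms by (auto simp: desing_abab)
  then show ?thesis
    unfolding linking_invariant_def linking_number_def fst_conv snd_conv
    using assms by (simp add: desing_abab link_sign_def)
qed

lemma crossing_invariant_desing_abab:
  assumes "a \<noteq> b"
  shows "crossing_invariant u v (desing [a, b, a, b], fst) = u a * v b"
proof -
  have "set (desing [a, b, a, b]) = {(a, 1, 2), (b, 1, 2)}"
    using assms by (auto simp: desing_abab)
  then show ?thesis
    unfolding crossing_invariant_def fst_conv snd_conv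
    using assms by (simp add: desing_abab link_sign_def)
qed

lemma linking_invariant_word_homotopic:
  assumes "word_homotopic \<tau> u v"
    and "\<And>a. \<phi> (\<tau> a) = - \<phi> a" "\<And>a l. \<psi> (\<tau> a) l = - \<psi> a l" "\<And>a. \<psi> a 0 = 0"
  shows "linking_invariant \<phi> \<psi> (desing u, fst) = linking_invariant \<phi> \<psi> (desing v, fst)"
  using assms unfolding word_homotopic_def by (rule linking_invariant_homotopic)

lemma crossing_invariant_word_homotopic:
  assumes "word_homotopic \<tau> u v"
    and "\<And>a. f (\<tau> a) = - f a" "\<And>a. g (\<tau> a) = - g a" "\<And>a. f a * g a = 0"
  shows "crossing_invariant f g (desing u, fst) = crossing_invariant f g (desing v, fst)"
  using assms unfolding word_homotopic_def by (rule crossing_invariant_homotopic)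

definition orbit_sign :: "('a \<Rightarrow> 'a) \<Rightarrow> 'a \<Rightarrow> 'a \<Rightarrow> int" where
  "orbit_sign \<tau> a x = (if x = a then 1 else if x = \<tau> a then -1 else 0)"

text \<open>In \<int>/2 oddness under \<tau> is just invariance, so orbit indicators are admissible even
  for letters fixed by \<tau>.\<close>

definition orbit_indicator :: "('a \<Rightarrow> 'a) \<Rightarrow> 'a \<Rightarrow> 'a \<Rightarrow> bit" where
  "orbit_indicator \<tau> a x = (if x = a \<or> x = \<tau> a then 1 else 0)"

lemma involution_eq_iff: "\<forall>x. \<tau> (\<tau> x) = x \<Longrightarrow> \<tau> x = y \<longleftrightarrow> x = \<tau> y"
  by metis

lemma orbit_sign_tau:
  "\<forall>x. \<tau> (\<tau> x) = x \<Longrightarrow> \<tau> a \<noteq> a \<Longrightarrow> orbit_sign \<tau> a (\<tau> x) = - orbit_sign \<tau> a x"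
  by (auto simp: orbit_sign_def involution_eq_iff)

lemma orbit_indicator_tau:
  "\<forall>x. \<tau> (\<tau> x) = x \<Longrightarrow> orbit_indicator \<tau> a (\<tau> x) = - orbit_indicator \<tau> a x"
  by (auto simp: orbit_indicator_def involution_eq_iff)

definition orbit_invariant :: "('a \<Rightarrow> 'a) \<Rightarrow> 'a \<Rightarrow> 'a list \<Rightarrow> int" where
  "orbit_invariant \<tau> a w =
     linking_invariant (orbit_sign \<tau> a) (\<lambda>x l. orbit_sign \<tau> a x * l\<^sup>2) (desing w, fst)"

lemma orbit_invariant_word_homotopic:
  assumes "\<forall>x. \<tau> (\<tau> x) = x" "\<tau> a \<noteq> a" "word_homotopic \<tau> u v"
  shows "orbit_invariant \<tau> a u = orbit_invariant \<tau> a v"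
  unfolding orbit_invariant_def using assms(3)
  by (rule linking_invariant_word_homotopic) (simp_all add: orbit_sign_tau[OF assms(1,2)])

lemma orbit_invariant_aaa: "orbit_invariant \<tau> a [b, b, b] = 2 * orbit_sign \<tau> a b"
  by (simp add: orbit_invariant_def linking_invariant_desing_aaa orbit_sign_def power2_eq_square)

lemma orbit_invariant_aaaa: "orbit_invariant \<tau> a [b, b, b, b] = 16 * orbit_sign \<tau> a b"
  by (simp add: orbit_invariant_def linking_invariant_desing_aaaa orbit_sign_def power2_eq_square)

lemma orbit_invariant_abab: "c \<noteq> d \<Longrightarrow> orbit_invariant \<tau> a [c, d, c, d] = 0"
  by (auto simp: orbit_invariant_def linking_invariant_desing_abab orbit_sign_def)

lemma orbit_invariant_Nil: "orbit_invariant \<tau> a [] = 0"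
  by (simp add: orbit_invariant_def)

lemma contractible_orbit_invariant:
  assumes "\<forall>x. \<tau> (\<tau> x) = x" "\<tau> a \<noteq> a" "contractible \<tau> w"
  shows "orbit_invariant \<tau> a w = 0"
  using orbit_invariant_word_homotopic[OF assms(1,2)] assms(3)
  by (simp add: contractible_iff_word_homotopic_Nil orbit_invariant_Nil)

lemma contractible_aaa_iff:
  assumes "\<forall>x. \<tau> (\<tau> x) = x" shows "contractible \<tau> [a, a, a] \<longleftrightarrow> \<tau> a = a"
  using contractible_orbit_invariant[OF assms, of a "[a, a, a]"] contractible_aaa[of \<tau> a]
  by (auto simp: orbit_invariant_aaa orbit_sign_def)

lemma contractible_aaaa_iff:
  assumes "\<forall>x. \<tau> (\<tau> x) = x" shows "contractible \<tau> [a, a, a, a] \<longleftrightarrow> \<tau> a = a"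
  using contractible_orbit_invariant[OF assms, of a "[a, a, a, a]"] contractible_aaaa[of \<tau> a]
  by (auto simp: orbit_invariant_aaaa orbit_sign_def)

lemma orbit_indicator_disjoint:
  assumes "\<forall>x. \<tau> (\<tau> x) = x" "a \<noteq> b" "\<tau> a \<noteq> b"
  shows "orbit_indicator \<tau> a x * orbit_indicator \<tau> b x = 0"
  using assms by (auto simp: orbit_indicator_def involution_eq_iff)

lemma crossing_orbit_invariant_word_homotopic:
  assumes "\<forall>x. \<tau> (\<tau> x) = x" "a \<noteq> b" "\<tau> a \<noteq> b" "word_homotopic \<tau> u v"
  shows "crossing_invariant (orbit_indicator \<tau> a) (orbit_indicator \<tau> b) (desing u, fst)
       = crossing_invariant (orbit_indicator \<tau> a) (orbit_indicator \<tau> b) (desing v, fst)"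
  using assms(4)
  by (rule crossing_invariant_word_homotopic)
    (simp_all only: orbit_indicator_tau[OF assms(1)] orbit_indicator_disjoint[OF assms(1-3)])

lemma contractible_abab_iff:
  assumes inv: "\<forall>x. \<tau> (\<tau> x) = x" and "a \<noteq> b"
  shows "contractible \<tau> [a, b, a, b] \<longleftrightarrow> \<tau> a = b"
proof
  assume "contractible \<tau> [a, b, a, b]"
  show "\<tau> a = b"
  proof (rule ccontr)
    assume "\<tau> a \<noteq> b"
    with \<open>contractible \<tau> [a, b, a, b]\<close> have
      "crossing_invariant (orbit_indicator \<tau> a) (orbit_indicator \<tau> b) (desing [a, b, a, b], fst)
       = crossing_invariant (orbit_indicator \<tau> a) (orbit_indicator \<tau> b) (desing [], fst)"
      using crossing_orbit_invariant_word_homotopic[OF inv \<open>a \<noteq> b\<close>]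
      by (simp add: contractible_iff_word_homotopic_Nil)
    then show False
      using \<open>a \<noteq> b\<close> by (simp add: crossing_invariant_desing_abab orbit_indicator_def)
  qed
next
  assume "\<tau> a = b"
  then show "contractible \<tau> [a, b, a, b]"
    using contractible_abab[OF \<open>a \<noteq> b\<close>] inv by metis
qed

lemma homotopic_power_word_eq:
  assumes inv: "\<forall>x. \<tau> (\<tau> x) = x" and "\<tau> a \<noteq> a" and u: "u = [a, a, a] \<or> u = [a, a, a, a]"
    and v: "(\<exists>b. v = [b, b, b] \<or> v = [b, b, b, b]) \<or> (\<exists>c d. c \<noteq> d \<and> v = [c, d, c, d])"
    and "word_homotopic \<tau> u v"
  shows "v = u"
proof -
  have "orbit_invariant \<tau> a u = orbit_invariant \<tau> a v"
    using orbit_invariant_word_homotopic[OF inv \<open>\<tau> a \<noteq> a\<close> \<open>word_homotopic \<tau> u v\<close>] .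
  then show ?thesis
    using u v by (auto simp: orbit_invariant_aaa orbit_invariant_aaaa orbit_invariant_abab
        orbit_sign_def split: if_splits)
qed

lemma homotopic_abab_eq:
  assumes inv: "\<forall>x. \<tau> (\<tau> x) = x" and "a \<noteq> b" "\<tau> a \<noteq> b" "c \<noteq> d"
    and hom: "word_homotopic \<tau> [a, b, a, b] [c, d, c, d]"
  shows "c = a \<and> d = b"
proof -
  txt \<open>The crossing invariant determines the orbits of c and d; linking invariants with values
    in \<int>/2 then rule out c = \<tau> a \<noteq> a and d = \<tau> b \<noteq> b.\<close>
  have "a \<noteq> \<tau> b" "\<tau> a \<noteq> \<tau> b" using assms(2,3) inv by metis+
  have "orbit_indicator \<tau> a c * orbit_indicator \<tau> b d = 1"
    using crossing_orbit_invariant_word_homotopic[OF inv assms(2,3) hom] assms(2,4)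
    by (simp add: crossing_invariant_desing_abab orbit_indicator_def)
  then have c: "c = a \<or> c = \<tau> a" and d: "d = b \<or> d = \<tau> b"
    by (auto simp: orbit_indicator_def split: if_splits)
  have linking_eq: "linking_invariant \<phi> \<psi> (desing [a, b, a, b], fst)
      = linking_invariant \<phi> \<psi> (desing [c, d, c, d], fst)"
    if "\<And>x. \<phi> (\<tau> x) = - \<phi> x" "\<And>x l. \<psi> (\<tau> x) l = - \<psi> x l" "\<And>x. \<psi> x 0 = 0"
    for \<phi> and \<psi> :: "'a \<Rightarrow> int \<Rightarrow> bit"
    using hom that by (rule linking_invariant_word_homotopic)
  have "c = a"
  proof (rule ccontr)
    assume "c \<noteq> a"
    then have "c = \<tau> a" "\<tau> a \<noteq> a" using c by auto
    let ?\<psi> = "\<lambda>x l. orbit_indicator \<tau> b x * (if l = -1 then 1 else 0)"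
    have "linking_invariant (orbit_sign \<tau> a) ?\<psi> (desing [a, b, a, b], fst)
        = linking_invariant (orbit_sign \<tau> a) ?\<psi> (desing [c, d, c, d], fst)"
      by (rule linking_eq) (simp_all add: orbit_sign_tau[OF inv \<open>\<tau> a \<noteq> a\<close>] orbit_indicator_tau[OF inv])
    then show False
      using \<open>c = \<tau> a\<close> d assms(2-4) \<open>a \<noteq> \<tau> b\<close> \<open>\<tau> a \<noteq> \<tau> b\<close> \<open>\<tau> a \<noteq> a\<close>
      by (auto simp: linking_invariant_desing_abab orbit_sign_def orbit_indicator_def)
  qed
  moreover have "d = b"
  proof (rule ccontr)
    assume "d \<noteq> b"
    then have "d = \<tau> b" "\<tau> b \<noteq> b" using d by auto
    let ?\<psi> = "\<lambda>x l. orbit_indicator \<tau> a x * (if l = 1 then 1 else 0)"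
    have "linking_invariant (orbit_sign \<tau> b) ?\<psi> (desing [a, b, a, b], fst)
        = linking_invariant (orbit_sign \<tau> b) ?\<psi> (desing [c, d, c, d], fst)"
      by (rule linking_eq) (simp_all add: orbit_sign_tau[OF inv \<open>\<tau> b \<noteq> b\<close>] orbit_indicator_tau[OF inv])
    then show False
      using \<open>d = \<tau> b\<close> c assms(2-4) \<open>a \<noteq> \<tau> b\<close> \<open>\<tau> a \<noteq> \<tau> b\<close> \<open>\<tau> b \<noteq> b\<close>
      by (auto simp: linking_invariant_desing_abab orbit_sign_def orbit_indicator_def)
  qed
  ultimately show ?thesis ..
qed

lemma noncontractible_homotopic_eq:
  assumes inv: "\<forall>x. \<tau> (\<tau> x) = x"
    and u: "u \<in> {w. (\<exists>a. w = [a, a, a] \<or> w = [a, a, a, a]) \<or> (\<exists>a b. a \<noteq> b \<and> w = [a, b, a, b])}"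
    and v: "v \<in> {w. (\<exists>a. w = [a, a, a] \<or> w = [a, a, a, a]) \<or> (\<exists>a b. a \<noteq> b \<and> w = [a, b, a, b])}"
    and "\<not> contractible \<tau> u" "\<not> contractible \<tau> v" "word_homotopic \<tau> u v"
  shows "u = v"
proof -
  have power_word: "x = w"
    if "w = [a, a, a] \<or> w = [a, a, a, a]" "\<not> contractible \<tau> w"
      "x \<in> {w. (\<exists>a. w = [a, a, a] \<or> w = [a, a, a, a]) \<or> (\<exists>a b. a \<noteq> b \<and> w = [a, b, a, b])}"
      "word_homotopic \<tau> w x"
    for w x a
  proof -
    have "\<tau> a \<noteq> a"
      using that(1,2) contractible_aaa_iff[OF inv] contractible_aaaa_iff[OF inv] by blast
    then show ?thesis using homotopic_power_word_eq[OF inv _ that(1) _ that(4)] that(3) by blast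
  qed
  have shapes: "(\<exists>a. w = [a, a, a] \<or> w = [a, a, a, a]) \<or> (\<exists>a b. a \<noteq> b \<and> w = [a, b, a, b])"
    if "w \<in> {w. (\<exists>a. w = [a, a, a] \<or> w = [a, a, a, a]) \<or> (\<exists>a b. a \<noteq> b \<and> w = [a, b, a, b])}"
    for w
    using that by simp
  consider a where "u = [a, a, a] \<or> u = [a, a, a, a]" | a b where "a \<noteq> b" "u = [a, b, a, b]"
    using shapes[OF u] by blast
  then show ?thesis
  proof cases
    case (1 a)
    from power_word[OF this assms(4) v assms(6)] show ?thesis by simp
  next
    case (2 a b)
    then have "\<tau> a \<noteq> b" using assms(4) contractible_abab_iff[OF inv] by blast
    consider c where "v = [c, c, c] \<or> v = [c, c, c, c]" | c d where "c \<noteq> d" "v = [c, d, c, d]"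
      using shapes[OF v] by blast
    then show ?thesis
    proof cases
      case (1 c)
      from power_word[OF this assms(5) u word_homotopic_sym[OF assms(6)]] show ?thesis .
    next
      case (2 c d)
      then show ?thesis
        using homotopic_abab_eq[OF inv \<open>a \<noteq> b\<close> \<open>\<tau> a \<noteq> b\<close> \<open>c \<noteq> d\<close>] assms(6) \<open>u = [a, b, a, b]\<close>
        by auto
    qed
  qed
qed

section \<open>Short multiplicity-one-free words\<close>

lemma length_le_4_cases:
  assumes "length w \<le> 4"
  obtains "w = []" | x where "w = [x]" | x y where "w = [x, y]" | x y z where "w = [x, y, z]"
    | x y z t where "w = [x, y, z, t]"
  using assms by (auto simp: length_Suc_conv le_Suc_eq numeral_eq_Suc)

lemma mult_one_free_length_le_4:
  assumes "mult_one_free w" "length w \<le> 4"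
  shows "w = [] \<or> (\<exists>a. w = [a, a] \<or> w = [a, a, a] \<or> w = [a, a, a, a]) \<or>
    (\<exists>a b. a \<noteq> b \<and> (w = [a, a, b, b] \<or> w = [a, b, b, a] \<or> w = [b, b, a, a] \<or> w = [a, b, a, b]))"
  using assms(2)
proof (cases rule: length_le_4_cases)
  case (5 x y z t)
  then show ?thesis using assms(1) by (auto simp: mult_one_free_def split: if_splits) metis
qed (use assms(1) in \<open>auto simp: mult_one_free_def split: if_splits\<close>)

theorem theorem9p1:
  fixes \<tau> :: "'a \<Rightarrow> 'a"
  assumes inv: "\<forall>x. \<tau> (\<tau> x) = x"
  shows
    "(\<forall>w :: 'a list. mult_one_free w \<and> length w \<le> 4 \<longrightarrow>
        w = [] \<or> (\<exists>a. w = [a, a] \<or> w = [a, a, a] \<or> w = [a, a, a, a]) \<or>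
        (\<exists>a b. a \<noteq> b \<and> (w = [a, a, b, b] \<or> w = [a, b, b, a] \<or> w = [b, b, a, a] \<or> w = [a, b, a, b])))
   \<and> (\<forall>a. contractible \<tau> [a, a])
   \<and> (\<forall>a b. a \<noteq> b \<longrightarrow> contractible \<tau> [a, a, b, b] \<and> contractible \<tau> [a, b, b, a]
                        \<and> contractible \<tau> [b, b, a, a])
   \<and> (\<forall>a. contractible \<tau> [a, a, a] \<longleftrightarrow> \<tau> a = a)
   \<and> (\<forall>a. contractible \<tau> [a, a, a, a] \<longleftrightarrow> \<tau> a = a)
   \<and> (\<forall>a b. a \<noteq> b \<longrightarrow> (contractible \<tau> [a, b, a, b] \<longleftrightarrow> \<tau> a = b))
   \<and> (\<forall>u v. u \<in> {w. (\<exists>a. w = [a, a, a] \<or> w = [a, a, a, a]) \<or> (\<exists>a b. a \<noteq> b \<and> w = [a, b, a, b])}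
          \<longrightarrow> v \<in> {w. (\<exists>a. w = [a, a, a] \<or> w = [a, a, a, a]) \<or> (\<exists>a b. a \<noteq> b \<and> w = [a, b, a, b])}
          \<longrightarrow> \<not> contractible \<tau> u \<longrightarrow> \<not> contractible \<tau> v
          \<longrightarrow> (word_homotopic \<tau> u v \<longleftrightarrow> u = v))"
proof (intro conjI allI impI)
  fix w :: "'a list"
  assume "mult_one_free w \<and> length w \<le> 4"
  then show "w = [] \<or> (\<exists>a. w = [a, a] \<or> w = [a, a, a] \<or> w = [a, a, a, a]) \<or>
      (\<exists>a b. a \<noteq> b \<and> (w = [a, a, b, b] \<or> w = [a, b, b, a] \<or> w = [b, b, a, a] \<or> w = [a, b, a, b]))"
    by (simp add: mult_one_free_length_le_4)
next
  fix u v :: "'a list"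
  assume "u \<in> {w. (\<exists>a. w = [a, a, a] \<or> w = [a, a, a, a]) \<or> (\<exists>a b. a \<noteq> b \<and> w = [a, b, a, b])}"
    and "v \<in> {w. (\<exists>a. w = [a, a, a] \<or> w = [a, a, a, a]) \<or> (\<exists>a b. a \<noteq> b \<and> w = [a, b, a, b])}"
    and "\<not> contractible \<tau> u" "\<not> contractible \<tau> v"
  then show "word_homotopic \<tau> u v \<longleftrightarrow> u = v"
    using noncontractible_homotopic_eq[OF inv] word_homotopic_refl by blast
qed (simp_all add: contractible_aa contractible_aabb contractible_abba contractible_aaa_iff[OF inv]
       contractible_aaaa_iff[OF inv] contractible_abab_iff[OF inv])

end
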